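(* Let $K^{(1)},K^{(2)}$ be independent fractal percolations on $I=[0,1]$ with the same parameters $M\in\mathbb{N}_{\geq2}$ and $p\in(0,1]$, with construction steps $K_n^{(i)}$, and let $D_n^{(i)}:=\overline{I\setminus K_n^{(i)}}$. Then for any $n\in\mathbb{N}_0$, $\mathbb{E}V_1(D_n^{(1)}\cap D_n^{(2)})=1-2p^n+p^{2n}$, $$\mathbb{E}V_0(D_n^{(1)}\cap D_n^{(2)})=2(Mp)^n\left(1-p\frac{M-1}{M-p}\left[1-\left(\frac pM\right)^n\right]\right)+1-4p^n+2p^{2n}+(Mp^2)^n\left(-1+p^2\frac{M-1}{M-p^2}\left[1-\left(\frac{p^2}{M}\right)^n\right]\right),$$ $\mathbb{E}V_1(D_n^{(1)})=1-p^n$, and $$\mathbb{E}V_0(D_n^{(1)})=(Mp)^n\left(1-p\frac{M-1}{M-p}\left[1-\left(\frac pM\right)^n\right]\right)+1-2p^n.$$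
   Context: Fractal percolation on $[0,1]$: $K_0=[0,1]$; given $K_{n-1}$, a union of closed grid intervals of length $M^{-(n-1)}$, each is divided into $M$ closed subintervals of length $M^{-n}$, each kept independently (of everything else) with probability $p$; $K_n$ is the union of kept subintervals. $\overline{A}$ denotes closure; $V_1$ is length and $V_0$ the number of connected components. *)

theory Defs
  imports "HOL-Probability.Probability"
begin

text \<open>Coins of the fractal percolation up to level n: one Bernoulli(p) coin for each
  pair (k, j) with 1 \<le> k \<le> n and j < M^k, i.e. for each grid interval
  [j/M^k, (j+1)/M^k] of level k.\<close>
definition coin_set :: "nat \<Rightarrow> nat \<Rightarrow> (nat \<times> nat) set" where
  "coin_set M n = {(k, j). 1 \<le> k \<and> k \<le> n \<and> j < M ^ k}"

definition perc_pmf :: "nat \<Rightarrow> real \<Rightarrow> nat \<Rightarrow> (nat \<times> nat \<Rightarrow> bool) pmf" where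
  "perc_pmf M p n = Pi_pmf (coin_set M n) False (\<lambda>_. bernoulli_pmf p)"

text \<open>The level-k interval with index j survives iff it and all its ancestors were kept;
  its ancestor at level l \<le> k has index j div M^(k-l).\<close>
definition kept :: "nat \<Rightarrow> (nat \<times> nat \<Rightarrow> bool) \<Rightarrow> nat \<Rightarrow> nat \<Rightarrow> bool" where
  "kept M \<omega> k j = (\<forall>l\<in>{1..k}. \<omega> (l, j div M ^ (k - l)))"

definition perc_K :: "nat \<Rightarrow> nat \<Rightarrow> (nat \<times> nat \<Rightarrow> bool) \<Rightarrow> real set" where
  "perc_K M n \<omega> = (\<Union>j\<in>{j. j < M ^ n \<and> kept M \<omega> n j}.
      {real j / real M ^ n .. (real j + 1) / real M ^ n})"

definition perc_D :: "nat \<Rightarrow> nat \<Rightarrow> (nat \<times> nat \<Rightarrow> bool) \<Rightarrow> real set" where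
  "perc_D M n \<omega> = closure ({0..1} - perc_K M n \<omega>)"

definition V1 :: "real set \<Rightarrow> real" where
  "V1 A = measure lborel A"

definition V0 :: "real set \<Rightarrow> real" where
  "V0 A = real (card (components A))"

end

(*
  D_n is the union of the removed level-n grid intervals (of length M^-n), and the intersection
  of two such sets is the union of the intervals removed in both plus some isolated grid points.
  Either way it is a one-dimensional cell complex on the grid: its length is the number of
  intervals divided by M^n, and its number of components is the number of vertices minus the
  number of intervals, as one sees by building it from left to right. By linearity of expectation
  everything reduces to single intervals and vertices. An interval survives iff the n coins of it
  and its ancestors succeed; an interior vertex i/M^n belongs to D_n unless both adjacent
  intervals survive, an event involving n + g(i) coins, where g(i) counts the levels on whose
  grid i/M^n lies. For two independent copies these probabilities get squared. Finally the sums
  of q^g(i) over the vertices satisfy a linear recursion in n, whose solution gives the closed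
  forms.
*)

theory Submission
  imports Defs
begin

section \<open>Components of sets of reals\<close>

lemma bij_betw_components_retraction:
  assumes "T \<subseteq> S" "continuous_on S r" "r ` S \<subseteq> T" "\<And>x. x \<in> T \<Longrightarrow> r x = x"
    and comp: "\<And>x. x \<in> S \<Longrightarrow> connected_component S x (r x)"
  shows "bij_betw ((`) r) (components S) (components T)"
proof -
  have stays: "r x \<in> E" if E: "E \<in> components S" and x: "x \<in> E" for E x
  proof -
    obtain z where z: "E = connected_component_set S z" using E by (auto simp: components_iff)
    have "x \<in> S" using x E in_components_subset by blast
    then have "connected_component S z (r x)"
      using comp x z connected_component_trans by (metis mem_Collect_eq)
    then show ?thesis using z by simp
  qed
  have image: "r ` E \<in> components T" if E: "E \<in> components S" for E
    unfolding in_components_maximal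
  proof (intro conjI allI impI)
    show "r ` E \<noteq> {}" using E in_components_nonempty by blast
    show "r ` E \<subseteq> T" using E assms(3) in_components_subset by blast
    have "continuous_on E r" using E assms(2) in_components_subset continuous_on_subset by blast
    then show "connected (r ` E)" using E in_components_connected connected_continuous_image by blast
    fix D assume D: "D \<noteq> {} \<and> r ` E \<subseteq> D \<and> D \<subseteq> T \<and> connected D"
    obtain x where "x \<in> E" using E in_components_nonempty by blast
    then have "D \<inter> E \<noteq> {}" using D stays[OF E] by blast
    then have "D \<subseteq> E" using components_maximal[OF E] D assms(1) by blast
    moreover have "D = r ` D" using D assms(4) by (simp add: subset_iff)
    ultimately have "D \<subseteq> r ` E" by blast
    then show "D = r ` E" using D by blast
  qed
  show ?thesis
  proof (rule bij_betw_imageI)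
    show "inj_on ((`) r) (components S)"
    proof (rule inj_onI)
      fix E1 E2 assume E: "E1 \<in> components S" "E2 \<in> components S" and eq: "r ` E1 = r ` E2"
      obtain x where x: "x \<in> E1" using E(1) in_components_nonempty by blast
      then obtain y where y: "y \<in> E2" "r x = r y" using eq by blast
      have "r x \<in> E1 \<inter> E2" using stays[OF E(1) x] stays[OF E(2) y(1)] y(2) by simp
      then show "E1 = E2" using components_eq[OF E] by blast
    qed
    show "(`) r ` components S = components T"
    proof (intro equalityI subsetI)
      fix C assume C: "C \<in> components T"
      obtain c where c: "c \<in> C" using C in_components_nonempty by blast
      have cT: "c \<in> T" using c C in_components_subset by blast
      define E where "E = connected_component_set S c"
      have E: "E \<in> components S" unfolding E_def using cT assms(1) by (blast intro: componentsI)
      have "c \<in> E" unfolding E_def using cT assms(1) by auto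
      then have "c \<in> r ` E" using assms(4)[OF cT] by force
      then have "r ` E = C" using components_eq[OF image[OF E] C] c by blast
      then show "C \<in> (`) r ` components S" using E by blast
    qed (use image in blast)
  qed
qed

lemma bij_betw_components_Un_interval:
  fixes T :: "real set"
  assumes T: "T \<subseteq> {..a}" "a \<in> T" and "a \<le> b"
  shows "bij_betw ((`) (\<lambda>x. min x a)) (components (T \<union> {a..b})) (components T)"
proof (rule bij_betw_components_retraction)
  show "continuous_on (T \<union> {a..b}) (\<lambda>x. min x a)" by (intro continuous_intros)
  show "(\<lambda>x. min x a) ` (T \<union> {a..b}) \<subseteq> T" using T by (auto simp: min_def)
  show "min x a = x" if "x \<in> T" for x using that T by auto
  show "connected_component (T \<union> {a..b}) x (min x a)" if x: "x \<in> T \<union> {a..b}" for x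
  proof (cases "x \<in> T")
    case True then show ?thesis using T by (auto simp: min_def)
  next
    case False
    then have "x \<in> {a..b}" using x by blast
    then show ?thesis
      by (intro connected_componentI[of "{a..b}"]) (auto simp: min_def)
  qed
qed auto

lemma components_Un_split:
  assumes "S \<inter> T = {}" and split: "\<And>D. connected D \<Longrightarrow> D \<subseteq> S \<union> T \<Longrightarrow> D \<subseteq> S \<or> D \<subseteq> T"
  shows "components (S \<union> T) = components S \<union> components T"
proof (intro equalityI subsetI)
  fix C assume C: "C \<in> components (S \<union> T)"
  then have "C \<subseteq> S \<or> C \<subseteq> T" using split in_components_connected in_components_subset by blast
  then show "C \<in> components S \<union> components T"
    using components_intermediate_subset[OF C] by blast
next
  have lift: "C \<in> components (S \<union> T)" if C: "C \<in> components S" and disj: "S \<inter> T = {}"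
    and split': "\<And>D. connected D \<Longrightarrow> D \<subseteq> S \<union> T \<Longrightarrow> D \<subseteq> S \<or> D \<subseteq> T" for S T C
    unfolding in_components_maximal
  proof (intro conjI allI impI)
    show "C \<noteq> {}" "C \<subseteq> S \<union> T" "connected C"
      using C in_components_nonempty in_components_subset in_components_connected by blast+
    fix D assume D: "D \<noteq> {} \<and> C \<subseteq> D \<and> D \<subseteq> S \<union> T \<and> connected D"
    have "D \<subseteq> S" using split'[of D] D disj \<open>C \<noteq> {}\<close> in_components_subset[OF C] by blast
    then show "D = C" using C D unfolding in_components_maximal by blast
  qed
  fix C assume "C \<in> components S \<union> components T"
  then show "C \<in> components (S \<union> T)"
    using lift[of C S T, OF _ assms] lift[of C T S] assms by (auto simp: Un_commute Int_commute)
qed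

lemma components_insert_isolated:
  fixes T :: "real set"
  assumes T: "T \<subseteq> {..a}" and "a < x"
  shows "components (insert x T) = insert {x} (components T)"
proof -
  have "D \<subseteq> T \<or> D \<subseteq> {x}" if D: "connected D" "D \<subseteq> T \<union> {x}" for D
  proof (rule ccontr)
    assume "\<not> (D \<subseteq> T \<or> D \<subseteq> {x})"
    then obtain y where y: "y \<in> D" "y \<in> T" and "x \<in> D" using D(2) by blast
    then have "(a + x) / 2 \<in> D"
      using D(1) T \<open>a < x\<close> unfolding connected_iff_interval by fastforce
    then show False using D(2) T \<open>a < x\<close> by force
  qed
  then have "components (T \<union> {x}) = components T \<union> components {x}"
    using T \<open>a < x\<close> by (intro components_Un_split) auto
  then show ?thesis using components_eq_sing_iff[of "{x}"] by simp
qed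

section \<open>Complexes of grid intervals\<close>

definition grid_cell :: "real \<Rightarrow> nat \<Rightarrow> real set" where
  "grid_cell d i = {real i / d .. (real i + 1) / d}"

definition grid_complex :: "real \<Rightarrow> (nat \<Rightarrow> bool) \<Rightarrow> (nat \<Rightarrow> bool) \<Rightarrow> nat \<Rightarrow> real set" where
  "grid_complex d P C m = {real i / d | i. i \<le> m \<and> P i} \<union> (\<Union>i\<in>{i. i < m \<and> C i}. grid_cell d i)"

lemma grid_complex_0: "grid_complex d P C 0 = (if P 0 then {0} else {})"
  unfolding grid_complex_def by auto

lemma grid_complex_Suc:
  "grid_complex d P C (Suc m) = grid_complex d P C m \<union> (if P (Suc m) then {real (Suc m) / d} else {})
     \<union> (if C m then grid_cell d m else {})"
proof -
  have "{real i / d | i. i \<le> Suc m \<and> P i}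
      = {real i / d | i. i \<le> m \<and> P i} \<union> (if P (Suc m) then {real (Suc m) / d} else {})"
    by (auto simp: le_Suc_eq simp del: of_nat_Suc)
  moreover have "(\<Union>i\<in>{i. i < Suc m \<and> C i}. grid_cell d i)
      = (\<Union>i\<in>{i. i < m \<and> C i}. grid_cell d i) \<union> (if C m then grid_cell d m else {})"
    by (auto simp: less_Suc_eq)
  ultimately show ?thesis unfolding grid_complex_def by (simp add: Un_ac)
qed

lemma grid_complex_subset_atMost:
  assumes "0 < d"
  shows "grid_complex d P C m \<subseteq> {..real m / d}"
proof
  fix x assume "x \<in> grid_complex d P C m"
  then consider i where "i \<le> m" "x = real i / d" | i where "i < m" "x \<in> grid_cell d i"
    unfolding grid_complex_def by auto
  then show "x \<in> {..real m / d}"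
  proof cases
    case 1
    then show ?thesis using assms by (simp add: divide_right_mono)
  next
    case 2
    then have "x \<le> (real i + 1) / d" "(real i + 1) / d \<le> real m / d"
      using assms by (auto simp: grid_cell_def divide_right_mono)
    then show ?thesis by simp
  qed
qed

lemma compact_grid_complex: "compact (grid_complex d P C m)"
proof -
  have "finite {real i / d | i. i \<le> m \<and> P i}" by simp
  moreover have "compact (\<Union>i\<in>{i. i < m \<and> C i}. grid_cell d i)"
    by (rule compact_UN) (auto simp: grid_cell_def)
  ultimately show ?thesis unfolding grid_complex_def by (simp add: compact_Un finite_imp_compact)
qed

lemma card_Collect_less_Suc:
  "card {i. i < Suc m \<and> P i} = card {i. i < m \<and> P i} + (if P m then 1 else 0)"
proof -
  have "{i. i < Suc m \<and> P i} = {i. i < m \<and> P i} \<union> {i. i = m \<and> P i}" by auto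
  then show ?thesis by (simp add: card_Un_disjoint Collect_conj_eq)
qed

lemma card_Collect_le_Suc:
  "card {i. i \<le> Suc m \<and> P i} = card {i. i \<le> m \<and> P i} + (if P (Suc m) then 1 else 0)"
  using card_Collect_less_Suc[of "Suc m" P] by (simp add: less_Suc_eq_le)

lemma measure_Un_finite_Int:
  fixes A B :: "real set"
  assumes "compact A" "compact B" "finite (A \<inter> B)"
  shows "measure lborel (A \<union> B) = measure lborel A + measure lborel B"
  using measure_Un3[OF fmeasurable_compact[OF assms(1)] fmeasurable_compact[OF assms(2)]]
    finite_imp_null_set_lborel[OF assms(3)] by (simp add: measure_def null_setsD1)

lemma measure_grid_complex:
  assumes d: "0 < d"
  shows "measure lborel (grid_complex d P C m) = real (card {i. i < m \<and> C i}) / d"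
proof (induction m)
  case 0
  then show ?case by (simp add: grid_complex_0)
next
  case (Suc m)
  define T where "T = grid_complex d P C m"
  define cell where "cell = (if C m then grid_cell d m else {})"
  define pt where "pt = (if P (Suc m) then {real (Suc m) / d} else {})"
  have "grid_complex d P C (Suc m) = (T \<union> cell) \<union> pt"
    unfolding grid_complex_Suc T_def cell_def pt_def by blast
  moreover have "compact (T \<union> cell)"
    unfolding T_def cell_def grid_cell_def by (simp add: compact_Un compact_grid_complex)
  ultimately have "measure lborel (grid_complex d P C (Suc m)) = measure lborel (T \<union> cell)"
    by (simp add: measure_Un_null_set borel_compact finite_imp_null_set_lborel pt_def)
  also have "\<dots> = measure lborel T + (if C m then 1 / d else 0)"
  proof (cases "C m")
    case True
    have "T \<inter> grid_cell d m \<subseteq> {real m / d}"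
      using grid_complex_subset_atMost[OF d, of P C m] unfolding T_def grid_cell_def by auto
    then have "finite (T \<inter> grid_cell d m)" using finite_subset by blast
    moreover have "measure lborel (grid_cell d m) = 1 / d"
      using d by (simp add: grid_cell_def divide_right_mono flip: diff_divide_distrib)
    ultimately show ?thesis using True measure_Un_finite_Int[of T "grid_cell d m"]
      by (simp add: T_def cell_def grid_cell_def compact_grid_complex)
  qed (simp add: cell_def)
  finally show ?case using Suc.IH
    by (simp add: T_def card_Collect_less_Suc add_divide_distrib)
qed

lemma card_components_grid_complex:
  assumes d: "0 < d" and edges: "\<And>i. C i \<Longrightarrow> P i \<and> P (Suc i)"
  shows "finite (components (grid_complex d P C m))
    \<and> card (components (grid_complex d P C m)) + card {i. i < m \<and> C i} = card {i. i \<le> m \<and> P i}"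
proof (induction m)
  case 0
  have "{i. i \<le> (0::nat) \<and> P i} = (if P 0 then {0} else {})" by auto
  then show ?case using components_eq_sing_iff[of "{0::real}"] by (simp add: grid_complex_0)
next
  case (Suc m)
  define T where "T = grid_complex d P C m"
  have T: "T \<subseteq> {..real m / d}" unfolding T_def by (rule grid_complex_subset_atMost[OF d])
  have fin: "finite (components T)"
    and count: "card (components T) + card {i. i < m \<and> C i} = card {i. i \<le> m \<and> P i}"
    using Suc.IH unfolding T_def by auto
  consider "C m" | "\<not> C m" "P (Suc m)" | "\<not> C m" "\<not> P (Suc m)" by blast
  then show ?case
  proof cases
    case 1
    have "P m" "P (Suc m)" using edges[OF 1] by auto
    then have a: "real m / d \<in> T" unfolding T_def grid_complex_def by auto
    have "grid_complex d P C (Suc m) = T \<union> {real m / d .. real (Suc m) / d}"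
      unfolding grid_complex_Suc T_def[symmetric] grid_cell_def using 1 \<open>P (Suc m)\<close> d
      by (auto simp: add_divide_distrib divide_right_mono)
    moreover have "bij_betw ((`) (\<lambda>x. min x (real m / d)))
        (components (T \<union> {real m / d .. real (Suc m) / d})) (components T)"
      using d by (intro bij_betw_components_Un_interval T a) (simp add: divide_right_mono)
    ultimately show ?thesis using fin count 1 \<open>P (Suc m)\<close>
      by (simp add: bij_betw_finite bij_betw_same_card card_Collect_less_Suc card_Collect_le_Suc)
  next
    case 2
    have lt: "real m / d < real (Suc m) / d" using d by (simp add: divide_strict_right_mono)
    have "grid_complex d P C (Suc m) = insert (real (Suc m) / d) T"
      unfolding grid_complex_Suc T_def[symmetric] using 2 by auto
    moreover have "{real (Suc m) / d} \<notin> components T"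
      using in_components_subset T lt by fastforce
    ultimately show ?thesis using components_insert_isolated[OF T lt] fin count 2
      by (simp add: card_Collect_less_Suc card_Collect_le_Suc)
  next
    case 3
    then have "grid_complex d P C (Suc m) = T" unfolding grid_complex_Suc T_def by simp
    then show ?thesis using fin count 3 by (simp add: card_Collect_less_Suc card_Collect_le_Suc)
  qed
qed

definition cell_endpoint :: "(nat \<Rightarrow> bool) \<Rightarrow> nat \<Rightarrow> bool" where
  "cell_endpoint R i \<longleftrightarrow> R i \<or> (0 < i \<and> R (i - 1))"

lemma grid_cell_Int:
  assumes d: "0 < d" and "i < j"
  shows "grid_cell d i \<inter> grid_cell d j = (if j = Suc i then {real j / d} else {})"
proof -
  have key: "j = Suc i \<and> x = real j / d" if "x \<in> grid_cell d i" "x \<in> grid_cell d j" for x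
  proof -
    have "real j \<le> x * d" "x * d \<le> real i + 1"
      using that d by (auto simp: grid_cell_def field_simps)
    then have "real j = real i + 1" "x * d = real j" using \<open>i < j\<close> by linarith+
    then show ?thesis using d by (auto simp: field_simps)
  qed
  have "real j / d \<in> grid_cell d i \<inter> grid_cell d j" if "j = Suc i"
    using that d by (auto simp: grid_cell_def divide_right_mono)
  then show ?thesis by (auto dest: key)
qed

lemma cell_endpoint_in_grid_cells:
  assumes "0 < d" "cell_endpoint R i"
  shows "real i / d \<in> (\<Union>j\<in>{j. R j}. grid_cell d j)"
  using assms unfolding cell_endpoint_def grid_cell_def
  by (auto intro!: bexI[of _ "i - 1"] divide_right_mono simp: of_nat_diff)

lemma Int_Union_grid_cells:
  fixes N :: nat
  assumes N: "0 < N" and R: "\<And>i. R1 i \<Longrightarrow> i < N" "\<And>i. R2 i \<Longrightarrow> i < N"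
  shows "(\<Union>j\<in>{j. R1 j}. grid_cell N j) \<inter> (\<Union>j\<in>{j. R2 j}. grid_cell N j)
    = grid_complex N (\<lambda>i. cell_endpoint R1 i \<and> cell_endpoint R2 i) (\<lambda>i. R1 i \<and> R2 i) N"
proof (intro equalityI subsetI)
  fix x assume "x \<in> (\<Union>j\<in>{j. R1 j}. grid_cell N j) \<inter> (\<Union>j\<in>{j. R2 j}. grid_cell N j)"
  then obtain j1 j2 where j: "R1 j1" "R2 j2" "x \<in> grid_cell N j1" "x \<in> grid_cell N j2" by blast
  have "j1 < N" "j2 < N" using R j by auto
  consider "j1 = j2" | "j1 < j2" | "j2 < j1" by linarith
  then show "x \<in> grid_complex N (\<lambda>i. cell_endpoint R1 i \<and> cell_endpoint R2 i) (\<lambda>i. R1 i \<and> R2 i) N"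
  proof cases
    case 1
    then show ?thesis using j \<open>j1 < N\<close> unfolding grid_complex_def by auto
  next
    case 2
    then have "j2 = Suc j1" "x = real j2 / N"
      using grid_cell_Int[of N j1 j2] j N by (auto split: if_splits)
    moreover have "cell_endpoint R1 j2" "cell_endpoint R2 j2"
      using j \<open>j2 = Suc j1\<close> by (auto simp: cell_endpoint_def)
    ultimately show ?thesis using less_imp_le[OF \<open>j2 < N\<close>] unfolding grid_complex_def by blast
  next
    case 3
    then have "j1 = Suc j2" "x = real j1 / N"
      using grid_cell_Int[of N j2 j1] j N by (auto split: if_splits)
    moreover have "cell_endpoint R1 j1" "cell_endpoint R2 j1"
      using j \<open>j1 = Suc j2\<close> by (auto simp: cell_endpoint_def)
    ultimately show ?thesis using less_imp_le[OF \<open>j1 < N\<close>] unfolding grid_complex_def by blast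
  qed
next
  fix x assume "x \<in> grid_complex N (\<lambda>i. cell_endpoint R1 i \<and> cell_endpoint R2 i) (\<lambda>i. R1 i \<and> R2 i) N"
  then show "x \<in> (\<Union>j\<in>{j. R1 j}. grid_cell N j) \<inter> (\<Union>j\<in>{j. R2 j}. grid_cell N j)"
    using cell_endpoint_in_grid_cells[of "real N"] N unfolding grid_complex_def by auto
qed

lemma V_Int_Union_grid_cells:
  fixes N :: nat
  assumes N: "0 < N" and R: "\<And>i. R1 i \<Longrightarrow> i < N" "\<And>i. R2 i \<Longrightarrow> i < N"
  defines "X \<equiv> (\<Union>j\<in>{j. R1 j}. grid_cell N j) \<inter> (\<Union>j\<in>{j. R2 j}. grid_cell N j)"
  shows "V1 X = real (card {i. i < N \<and> R1 i \<and> R2 i}) / N"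
    and "V0 X = real (card {i. i \<le> N \<and> cell_endpoint R1 i \<and> cell_endpoint R2 i})
                - real (card {i. i < N \<and> R1 i \<and> R2 i})"
proof -
  have X: "X = grid_complex N (\<lambda>i. cell_endpoint R1 i \<and> cell_endpoint R2 i) (\<lambda>i. R1 i \<and> R2 i) N"
    unfolding X_def using N R by (rule Int_Union_grid_cells)
  show "V1 X = real (card {i. i < N \<and> R1 i \<and> R2 i}) / N"
    unfolding V1_def X using N by (simp add: measure_grid_complex)
  have "R1 i \<and> R2 i \<Longrightarrow> (cell_endpoint R1 i \<and> cell_endpoint R2 i) \<and>
      (cell_endpoint R1 (Suc i) \<and> cell_endpoint R2 (Suc i))" for i
    by (simp add: cell_endpoint_def)
  then have "card (components X) + card {i. i < N \<and> R1 i \<and> R2 i}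
      = card {i. i \<le> N \<and> cell_endpoint R1 i \<and> cell_endpoint R2 i}"
    unfolding X using N by (intro conjunct2[OF card_components_grid_complex]) simp_all
  then show "V0 X = real (card {i. i \<le> N \<and> cell_endpoint R1 i \<and> cell_endpoint R2 i})
                - real (card {i. i < N \<and> R1 i \<and> R2 i})"
    unfolding V0_def by (simp flip: of_nat_add)
qed

lemma grid_cell_cover:
  fixes N :: nat
  assumes N: "0 < N" and x: "0 \<le> x" "x \<le> 1"
  shows "\<exists>j<N. x \<in> grid_cell N j"
proof -
  define j where "j = min (nat \<lfloor>x * N\<rfloor>) (N - 1)"
  have "j < N" using N unfolding j_def by simp
  moreover have "x \<in> grid_cell N j"
  proof (cases "x * N < N")
    case True
    then have "nat \<lfloor>x * N\<rfloor> \<le> N - 1" using x by linarith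
    then have "real j = of_int \<lfloor>x * N\<rfloor>" using x unfolding j_def by simp
    then show ?thesis using N unfolding grid_cell_def by (simp add: field_simps) linarith
  next
    case False
    then have "x = 1" using x N by (simp add: mult_le_cancel_right2)
    moreover have "j = N - 1" using N unfolding j_def \<open>x = 1\<close> by simp
    ultimately show ?thesis using N unfolding grid_cell_def by (simp add: of_nat_diff)
  qed
  ultimately show ?thesis by blast
qed

lemma grid_cell_Int_open_cell:
  assumes d: "0 < d" and "j' \<noteq> j"
  shows "grid_cell d j' \<inter> {real j / d <..< (real j + 1) / d} = {}"
proof -
  have "y \<notin> grid_cell d j'" if y: "y \<in> {real j / d <..< (real j + 1) / d}" for y
  proof
    assume y': "y \<in> grid_cell d j'"
    have y_cell: "y \<in> grid_cell d j" using y unfolding grid_cell_def by auto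
    consider "j < j'" | "j' < j" using \<open>j' \<noteq> j\<close> by linarith
    then show False
    proof cases
      case 1
      then have "j' = Suc j" "y = real j' / d"
        using grid_cell_Int[OF d 1] y_cell y' by (auto split: if_splits)
      then have "y = (real j + 1) / d" by (simp add: add.commute)
      then show False using y by simp
    next
      case 2
      then have "y = real j / d"
        using grid_cell_Int[OF d 2] y_cell y' by (auto split: if_splits)
      then show False using y by simp
    qed
  qed
  then show ?thesis by blast
qed

lemma closure_diff_Union_grid_cells:
  fixes N :: nat
  assumes N: "0 < N"
  shows "closure ({0..1} - (\<Union>j\<in>{j. j < N \<and> K j}. grid_cell N j))
    = (\<Union>j\<in>{j. j < N \<and> \<not> K j}. grid_cell N j)"
    (is "closure ({0..1} - ?K) = ?D")
proof
  have "{0..1} - ?K \<subseteq> ?D"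
  proof
    fix x assume x: "x \<in> {0..1} - ?K"
    then obtain j where j: "j < N" "x \<in> grid_cell N j" using grid_cell_cover[OF N] by auto
    then have "\<not> K j" using x by blast
    then show "x \<in> ?D" using j by blast
  qed
  moreover have "closed ?D" by (intro closed_UN) (auto simp: grid_cell_def)
  ultimately show "closure ({0..1} - ?K) \<subseteq> ?D" by (rule closure_minimal)
next
  have "grid_cell N j \<subseteq> closure ({0..1} - ?K)" if j: "j < N" "\<not> K j" for j
  proof -
    let ?I = "{real j / N <..< (real j + 1) / N}"
    have "real j + 1 \<le> real N" using j by linarith
    then have "?I \<subseteq> {0..1}" using N by (simp add: greaterThanLessThan_subseteq_atLeastAtMost_iff)
    moreover have "y \<notin> ?K" if y: "y \<in> ?I" for y
    proof
      assume "y \<in> ?K"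
      then obtain j' where "K j'" "y \<in> grid_cell N j'" by blast
      moreover from this have "j' \<noteq> j" using j(2) by blast
      ultimately show False using grid_cell_Int_open_cell[of N j' j] y N by auto
    qed
    ultimately have "?I \<subseteq> {0..1} - ?K" by blast
    then have "closure ?I \<subseteq> closure ({0..1} - ?K)" by (rule closure_mono)
    moreover have "real j / N < (real j + 1) / N" using N by (simp add: divide_strict_right_mono)
    ultimately show ?thesis using closure_greaterThanLessThan unfolding grid_cell_def by simp
  qed
  then show "?D \<subseteq> closure ({0..1} - ?K)" by blast
qed

section \<open>Fractal percolation\<close>

lemma expectation_card_Collect:
  assumes "finite I"
  shows "measure_pmf.expectation Q (\<lambda>x. real (card {i \<in> I. A i x}))
    = (\<Sum>i\<in>I. measure_pmf.prob Q {x. A i x})"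
proof -
  have "real (card {i \<in> I. A i x}) = (\<Sum>i\<in>I. indicator {x. A i x} x)" for x
  proof -
    have "{i \<in> I. A i x} = I \<inter> {i. A i x}" by blast
    then show ?thesis using assms by (simp add: indicator_def sum.If_cases)
  qed
  then have "measure_pmf.expectation Q (\<lambda>x. real (card {i \<in> I. A i x}))
      = measure_pmf.expectation Q (\<lambda>x. \<Sum>i\<in>I. indicator {x. A i x} x)"
    by simp
  also have "\<dots> = (\<Sum>i\<in>I. measure_pmf.expectation Q (indicator {x. A i x}))"
    by (intro Bochner_Integration.integral_sum integrable_real_indicator)
      (simp_all add: measure_pmf.emeasure_finite[THEN less_top[THEN iffD1]])
  finally show ?thesis
    by (simp only: Bochner_Integration.integral_indicator space_measure_pmf Int_UNIV_right)
qed

lemma measure_pair_pmf_Times: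
  "measure_pmf.prob (pair_pmf P Q) (A \<times> B) = measure_pmf.prob P A * measure_pmf.prob Q B"
proof -
  have "measure_pmf.prob (pair_pmf P Q) (A \<times> B)
      = measure_pmf.prob (pair_pmf P Q) ((A \<inter> set_pmf P) \<times> (B \<inter> set_pmf Q))"
    by (subst measure_Int_set_pmf[symmetric]) (auto intro!: arg_cong[where f = "measure_pmf.prob _"])
  also have "\<dots> = measure_pmf.prob P (A \<inter> set_pmf P) * measure_pmf.prob Q (B \<inter> set_pmf Q)"
    by (intro measure_pmf_prob_product) (auto intro: countable_subset)
  finally show ?thesis by (simp add: measure_Int_set_pmf)
qed

lemma expectation_pair_card_Collect:
  assumes "finite I"
  shows "measure_pmf.expectation (pair_pmf Q Q) (\<lambda>(x, y). real (card {i \<in> I. A i x \<and> A i y}))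
    = (\<Sum>i\<in>I. (measure_pmf.prob Q {x. A i x})\<^sup>2)"
proof -
  have "{z. A i (fst z) \<and> A i (snd z)} = {x. A i x} \<times> {x. A i x}" for i by auto
  then show ?thesis
    using expectation_card_Collect[OF assms, of "pair_pmf Q Q" "\<lambda>i z. A i (fst z) \<and> A i (snd z)"]
    by (simp add: case_prod_unfold measure_pair_pmf_Times power2_eq_square)
qed

definition removed_cell :: "nat \<Rightarrow> nat \<Rightarrow> (nat \<times> nat \<Rightarrow> bool) \<Rightarrow> nat \<Rightarrow> bool" where
  "removed_cell M n \<omega> j \<longleftrightarrow> j < M ^ n \<and> \<not> kept M \<omega> n j"

lemma perc_D_eq_Union_grid_cells:
  assumes "0 < M"
  shows "perc_D M n \<omega> = (\<Union>j\<in>{j. removed_cell M n \<omega> j}. grid_cell (real (M ^ n)) j)"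
proof -
  have "perc_K M n \<omega> = (\<Union>j\<in>{j. j < M ^ n \<and> kept M \<omega> n j}. grid_cell (real (M ^ n)) j)"
    unfolding perc_K_def grid_cell_def by simp
  then show ?thesis unfolding perc_D_def removed_cell_def
    using closure_diff_Union_grid_cells[of "M ^ n" "kept M \<omega> n"] assms by simp
qed

text \<open>Ancestors are indexed by the number t of levels above n; the definition of kept uses
  the level l = n - t instead.\<close>

definition ancestors :: "nat \<Rightarrow> nat \<Rightarrow> nat \<Rightarrow> (nat \<times> nat) set" where
  "ancestors M n j = (\<lambda>t. (n - t, j div M ^ t)) ` {..<n}"

lemma kept_iff_ancestors: "kept M \<omega> n j \<longleftrightarrow> (\<forall>c\<in>ancestors M n j. \<omega> c)"
proof -
  have "(\<forall>l\<in>{1..n}. \<omega> (l, j div M ^ (n - l))) \<longleftrightarrow> (\<forall>t<n. \<omega> (n - t, j div M ^ t))"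
  proof (intro iffI ballI allI impI)
    fix t assume "\<forall>l\<in>{1..n}. \<omega> (l, j div M ^ (n - l))" "t < n"
    then show "\<omega> (n - t, j div M ^ t)" by (auto dest: bspec[of _ _ "n - t"])
  next
    fix l assume "\<forall>t<n. \<omega> (n - t, j div M ^ t)" "l \<in> {1..n}"
    then show "\<omega> (l, j div M ^ (n - l))" by (auto dest: spec[of _ "n - l"])
  qed
  then show ?thesis unfolding kept_def ancestors_def by auto
qed

lemma ancestors_subset_coin_set:
  assumes "0 < M" "j < M ^ n"
  shows "ancestors M n j \<subseteq> coin_set M n"
proof
  fix c assume "c \<in> ancestors M n j"
  then obtain t where t: "t < n" "c = (n - t, j div M ^ t)" unfolding ancestors_def by auto
  have "M ^ n = M ^ (n - t) * M ^ t" using t(1) by (simp flip: power_add)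
  then have "j div M ^ t < M ^ (n - t)" using assms by (simp add: div_less_iff_less_mult)
  then show "c \<in> coin_set M n" using t unfolding coin_set_def by auto
qed

lemma card_ancestors: "card (ancestors M n j) = n"
  unfolding ancestors_def by (subst card_image) (auto simp: inj_on_def)

lemma finite_coin_set: "finite (coin_set M n)"
proof -
  have "coin_set M n = Sigma {1..n} (\<lambda>k. {..<M ^ k})" unfolding coin_set_def by auto
  then show ?thesis by simp
qed

lemma finite_set_pmf_perc_pmf: "finite (set_pmf (perc_pmf M p n))"
proof -
  have "finite (PiE_dflt (coin_set M n) False (\<lambda>_. set_pmf (bernoulli_pmf p)))"
    by (intro finite_PiE_dflt finite_coin_set) auto
  moreover have "set_pmf (perc_pmf M p n) \<subseteq> PiE_dflt (coin_set M n) False (\<lambda>_. set_pmf (bernoulli_pmf p))"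
    unfolding perc_pmf_def using set_Pi_pmf_subset'[OF finite_coin_set] by (simp add: o_def)
  ultimately show ?thesis by (rule finite_subset[rotated])
qed

lemma prob_all_coins:
  assumes p: "0 \<le> p" "p \<le> 1" and S: "S \<subseteq> coin_set M n"
  shows "measure_pmf.prob (perc_pmf M p n) {\<omega>. \<forall>c\<in>S. \<omega> c} = p ^ card S"
proof -
  note fin = finite_coin_set[of M n]
  define B where "B c = (if c \<in> S then {True} else UNIV)" for c :: "nat \<times> nat"
  have "{\<omega>. \<forall>c\<in>S. \<omega> c} = Pi (coin_set M n) B"
    using S unfolding B_def Pi_def by auto
  then have "measure_pmf.prob (perc_pmf M p n) {\<omega>. \<forall>c\<in>S. \<omega> c}
      = (\<Prod>c\<in>coin_set M n. measure_pmf.prob (bernoulli_pmf p) (B c))"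
    unfolding perc_pmf_def using fin by (simp add: measure_Pi_pmf_Pi)
  also have "\<dots> = (\<Prod>c\<in>coin_set M n. if c \<in> S then p else 1)"
    using p by (intro prod.cong) (auto simp: B_def measure_pmf_single)
  also have "\<dots> = p ^ card S"
    using S fin by (simp add: prod.If_cases Int_absorb1)
  finally show ?thesis .
qed

lemma prob_not_all_coins:
  assumes "0 \<le> p" "p \<le> 1" "S \<subseteq> coin_set M n"
  shows "measure_pmf.prob (perc_pmf M p n) {\<omega>. \<not> (\<forall>c\<in>S. \<omega> c)} = 1 - p ^ card S"
proof -
  have "{\<omega>. \<not> (\<forall>c\<in>S. \<omega> c)} = space (perc_pmf M p n) - {\<omega>. \<forall>c\<in>S. \<omega> c}" by auto
  then have "measure_pmf.prob (perc_pmf M p n) {\<omega>. \<not> (\<forall>c\<in>S. \<omega> c)}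
      = 1 - measure_pmf.prob (perc_pmf M p n) {\<omega>. \<forall>c\<in>S. \<omega> c}"
    by (simp only: measure_pmf.prob_compl sets_measure_pmf UNIV_I)
  then show ?thesis using prob_all_coins[OF assms] by simp
qed

lemma prob_removed_cell:
  assumes "0 < M" "0 \<le> p" "p \<le> 1" "j < M ^ n"
  shows "measure_pmf.prob (perc_pmf M p n) {\<omega>. removed_cell M n \<omega> j} = 1 - p ^ n"
  using prob_not_all_coins[OF assms(2,3) ancestors_subset_coin_set[OF assms(1,4)]] assms(4)
  by (simp add: removed_cell_def kept_iff_ancestors card_ancestors)

text \<open>The two intervals adjacent to the vertex i/M^n have different ancestors at level n - t
  exactly when M^t divides i.\<close>

definition grid_levels :: "nat \<Rightarrow> nat \<Rightarrow> nat \<Rightarrow> nat" where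
  "grid_levels M n i = card {t. t < n \<and> M ^ t dvd i}"

lemma pred_div_eq_div_iff:
  fixes i k :: nat
  assumes "0 < i"
  shows "(i - 1) div k = i div k \<longleftrightarrow> \<not> k dvd i"
  using assms div_Suc[of "i - 1" k] by (simp add: dvd_eq_mod_eq_0)

lemma card_ancestors_Un:
  assumes "0 < i"
  shows "card (ancestors M n (i - 1) \<union> ancestors M n i) = n + grid_levels M n i"
proof -
  define X where "X = (\<lambda>t. (n - t, (i - 1) div M ^ t)) ` {t. t < n \<and> M ^ t dvd i}"
  have "ancestors M n (i - 1) \<union> ancestors M n i = ancestors M n i \<union> X"
  proof (intro equalityI subsetI)
    fix c assume "c \<in> ancestors M n (i - 1) \<union> ancestors M n i"
    then consider "c \<in> ancestors M n i" | t where "t < n" "c = (n - t, (i - 1) div M ^ t)"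
      unfolding ancestors_def by blast
    then show "c \<in> ancestors M n i \<union> X"
    proof cases
      case (2 t)
      show ?thesis
      proof (cases "M ^ t dvd i")
        case True
        then show ?thesis using 2 unfolding X_def by blast
      next
        case False
        then have "c = (n - t, i div M ^ t)" using 2 pred_div_eq_div_iff[OF assms] by simp
        then show ?thesis using \<open>t < n\<close> unfolding ancestors_def by blast
      qed
    qed blast
  qed (auto simp: ancestors_def X_def)
  moreover have "ancestors M n i \<inter> X = {}"
  proof -
    have "(n - t, i div M ^ t) \<noteq> (n - t', (i - 1) div M ^ t')"
      if "t < n" "t' < n" "M ^ t' dvd i" for t t'
    proof
      assume eq: "(n - t, i div M ^ t) = (n - t', (i - 1) div M ^ t')"
      then have "t = t'" using that by (simp; arith)
      then show False using eq that(3) pred_div_eq_div_iff[OF assms, of "M ^ t'"] by simp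
    qed
    then show ?thesis unfolding ancestors_def X_def by blast
  qed
  moreover have "card X = grid_levels M n i"
    unfolding X_def grid_levels_def by (subst card_image) (auto simp: inj_on_def)
  moreover have "finite X" "finite (ancestors M n i)" unfolding X_def ancestors_def by auto
  ultimately show ?thesis by (simp add: card_Un_disjoint card_ancestors)
qed

lemma prob_cell_endpoint:
  assumes M: "0 < M" and p: "0 \<le> p" "p \<le> 1" and i: "i \<le> M ^ n"
  shows "measure_pmf.prob (perc_pmf M p n) {\<omega>. cell_endpoint (removed_cell M n \<omega>) i}
    = (if i = 0 \<or> i = M ^ n then 1 - p ^ n else 1 - p ^ (n + grid_levels M n i))"
proof -
  have N: "0 < M ^ n" using M by simp
  consider "i = 0" | "i = M ^ n" | "0 < i" "i < M ^ n" using i by linarith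
  then show ?thesis
  proof cases
    case 1
    then show ?thesis using prob_removed_cell[OF M p N] by (simp add: cell_endpoint_def)
  next
    case 2
    then have "cell_endpoint (removed_cell M n \<omega>) i \<longleftrightarrow> removed_cell M n \<omega> (M ^ n - 1)" for \<omega>
      using N by (auto simp: cell_endpoint_def removed_cell_def)
    then show ?thesis using prob_removed_cell[OF M p, of "M ^ n - 1"] 2 N by simp
  next
    case 3
    then have "cell_endpoint (removed_cell M n \<omega>) i
        \<longleftrightarrow> \<not> (\<forall>c\<in>ancestors M n (i - 1) \<union> ancestors M n i. \<omega> c)" for \<omega>
      by (auto simp: cell_endpoint_def removed_cell_def kept_iff_ancestors)
    moreover have "ancestors M n (i - 1) \<union> ancestors M n i \<subseteq> coin_set M n"
      using ancestors_subset_coin_set[OF M] 3 by (simp add: less_imp_diff_less)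
    ultimately show ?thesis
      using prob_not_all_coins[OF p] card_ancestors_Un[OF \<open>0 < i\<close>] 3 by simp
  qed
qed

lemma sum_cell_endpoint_probs:
  fixes f :: "real \<Rightarrow> real"
  assumes M: "0 < M" and p: "0 \<le> p" "p \<le> 1"
  shows "(\<Sum>i\<le>M ^ n. f (measure_pmf.prob (perc_pmf M p n) {\<omega>. cell_endpoint (removed_cell M n \<omega>) i}))
    = 2 * f (1 - p ^ n) + (\<Sum>i\<in>{1..<M ^ n}. f (1 - p ^ n * p ^ grid_levels M n i))"
proof -
  have N: "0 < M ^ n" using M by simp
  have "{..M ^ n} = insert 0 (insert (M ^ n) {1..<M ^ n})" using N by auto
  moreover have "(\<Sum>i\<in>{1..<M ^ n}. f (measure_pmf.prob (perc_pmf M p n) {\<omega>. cell_endpoint (removed_cell M n \<omega>) i}))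
      = (\<Sum>i\<in>{1..<M ^ n}. f (1 - p ^ n * p ^ grid_levels M n i))"
    using prob_cell_endpoint[OF M p] by (intro sum.cong) (auto simp: power_add)
  ultimately show ?thesis using N prob_cell_endpoint[OF M p] by simp
qed

lemma grid_levels_mult_add:
  assumes "0 < b" "b < M"
  shows "grid_levels M (Suc n) (a * M + b) = 1"
proof -
  have "\<not> M ^ t dvd a * M + b" if "0 < t" for t
  proof
    assume "M ^ t dvd a * M + b"
    moreover have "M dvd M ^ t" using that by (simp add: dvd_power)
    ultimately have "M dvd b" by (metis dvd_add_right_iff dvd_trans dvd_triv_right)
    then show False using assms by (auto dest: dvd_imp_le)
  qed
  then have "{t. t < Suc n \<and> M ^ t dvd a * M + b} = {0}" by auto
  then show ?thesis unfolding grid_levels_def by simp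
qed

lemma grid_levels_mult:
  assumes "0 < M"
  shows "grid_levels M (Suc n) (a * M) = Suc (grid_levels M n a)"
proof -
  have "{t. t < Suc n \<and> M ^ t dvd a * M} = insert 0 (Suc ` {t. t < n \<and> M ^ t dvd a})"
  proof (intro equalityI subsetI)
    fix t assume t: "t \<in> {t. t < Suc n \<and> M ^ t dvd a * M}"
    show "t \<in> insert 0 (Suc ` {t. t < n \<and> M ^ t dvd a})"
    proof (cases t)
      case (Suc s)
      then have "M ^ s * M dvd a * M" using t by (simp add: mult.commute)
      then have "M ^ s dvd a" using assms by simp
      then show ?thesis using Suc t by auto
    qed simp
  qed (auto simp: mult.commute)
  then show ?thesis unfolding grid_levels_def by (simp add: card_image)
qed

lemma sum_lessThan_mult:
  fixes m k :: nat
  shows "(\<Sum>i<m * k. g i) = (\<Sum>a<m. \<Sum>b<k. g (a * k + b))"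
proof -
  have "(\<Sum>i\<in>{a * k..<a * k + k}. g i) = (\<Sum>b<k. g (a * k + b))" for a
    using sum.shift_bounds_nat_ivl[of g 0 "a * k" k] by (simp add: atLeast0LessThan add.commute)
  then show ?thesis using sum.nat_group[of g k m] by simp
qed

lemma sum_power_grid_levels_Suc:
  fixes q :: real
  assumes M: "0 < M"
  shows "(\<Sum>i<M ^ Suc n. q ^ grid_levels M (Suc n) i)
    = q * (\<Sum>i<M ^ n. q ^ grid_levels M n i) + (real M - 1) * q * real M ^ n"
proof -
  have block: "(\<Sum>b<M. q ^ grid_levels M (Suc n) (a * M + b))
      = q * q ^ grid_levels M n a + (real M - 1) * q" for a
  proof -
    have "{..<M} = insert 0 {1..<M}" using M by auto
    then have "(\<Sum>b<M. q ^ grid_levels M (Suc n) (a * M + b))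
        = q ^ grid_levels M (Suc n) (a * M) + (\<Sum>b\<in>{1..<M}. q)"
      by (simp add: grid_levels_mult_add)
    then show ?thesis using M by (simp add: grid_levels_mult of_nat_diff)
  qed
  have "(\<Sum>i<M ^ Suc n. q ^ grid_levels M (Suc n) i)
      = (\<Sum>a<M ^ n. \<Sum>b<M. q ^ grid_levels M (Suc n) (a * M + b))"
    unfolding power_Suc2 sum_lessThan_mult ..
  also have "\<dots> = q * (\<Sum>a<M ^ n. q ^ grid_levels M n a) + (real M - 1) * q * real M ^ n"
    by (simp add: block sum.distrib sum_distrib_left)
  finally show ?thesis .
qed

lemma sum_power_grid_levels:
  fixes q :: real
  assumes M: "0 < M" and q: "q \<noteq> real M"
  shows "(\<Sum>i<M ^ n. q ^ grid_levels M n i) = q ^ n + (real M - 1) * q * (real M ^ n - q ^ n) / (real M - q)"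
proof (induction n)
  case 0
  then show ?case by (simp add: grid_levels_def)
next
  case (Suc n)
  have "real M - q \<noteq> 0" using q by simp
  have "(\<Sum>i<M ^ Suc n. q ^ grid_levels M (Suc n) i)
      = q * (q ^ n + (real M - 1) * q * (real M ^ n - q ^ n) / (real M - q)) + (real M - 1) * q * real M ^ n"
    by (simp only: sum_power_grid_levels_Suc[OF M] Suc.IH)
  also have "\<dots> = q ^ Suc n + (real M - 1) * q * (real M ^ Suc n - q ^ Suc n) / (real M - q)"
    using \<open>real M - q \<noteq> 0\<close> by (simp add: divide_simps) (simp add: algebra_simps)
  finally show ?case .
qed

lemma sum_power_grid_levels_interior:
  fixes q :: real
  assumes M: "0 < M" and q: "q \<noteq> real M"
  shows "(\<Sum>i\<in>{1..<M ^ n}. q ^ grid_levels M n i) = (real M - 1) * q * (real M ^ n - q ^ n) / (real M - q)"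
proof -
  have "{..<M ^ n} = insert 0 {1..<M ^ n}" using M by auto
  moreover have "grid_levels M n 0 = n" by (simp add: grid_levels_def)
  ultimately show ?thesis using sum_power_grid_levels[OF assms, of n] by simp
qed

section \<open>Expected length and number of components\<close>

lemma V_perc_D_Int:
  assumes "0 < M"
  shows "V1 (perc_D M n \<omega>1 \<inter> perc_D M n \<omega>2)
      = real (card {j \<in> {..<M ^ n}. removed_cell M n \<omega>1 j \<and> removed_cell M n \<omega>2 j}) / real M ^ n"
    and "V0 (perc_D M n \<omega>1 \<inter> perc_D M n \<omega>2)
      = real (card {i \<in> {..M ^ n}. cell_endpoint (removed_cell M n \<omega>1) i \<and> cell_endpoint (removed_cell M n \<omega>2) i})
        - real (card {j \<in> {..<M ^ n}. removed_cell M n \<omega>1 j \<and> removed_cell M n \<omega>2 j})"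
  using V_Int_Union_grid_cells[of "M ^ n" "removed_cell M n \<omega>1" "removed_cell M n \<omega>2"] assms
  by (simp_all add: perc_D_eq_Union_grid_cells removed_cell_def)

lemma expectation_V1_perc_D:
  assumes M: "0 < M" and p: "0 \<le> p" "p \<le> 1"
  shows "measure_pmf.expectation (perc_pmf M p n) (\<lambda>\<omega>. V1 (perc_D M n \<omega>)) = 1 - p ^ n"
proof -
  have "V1 (perc_D M n \<omega>) = real (card {j \<in> {..<M ^ n}. removed_cell M n \<omega> j}) / real M ^ n" for \<omega>
    using V_perc_D_Int(1)[OF M, of n \<omega> \<omega>] by simp
  then have "measure_pmf.expectation (perc_pmf M p n) (\<lambda>\<omega>. V1 (perc_D M n \<omega>))
      = measure_pmf.expectation (perc_pmf M p n)
          (\<lambda>\<omega>. real (card {j \<in> {..<M ^ n}. removed_cell M n \<omega> j})) / real M ^ n"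
    by simp
  also have "\<dots> = 1 - p ^ n"
    using M expectation_card_Collect[where I="{..<M ^ n}" and A="\<lambda>j \<omega>. removed_cell M n \<omega> j"]
    by (simp add: prob_removed_cell[OF M p])
  finally show ?thesis .
qed

lemma expectation_V1_perc_D_Int:
  assumes M: "0 < M" and p: "0 \<le> p" "p \<le> 1"
  shows "measure_pmf.expectation (pair_pmf (perc_pmf M p n) (perc_pmf M p n))
      (\<lambda>(\<omega>1, \<omega>2). V1 (perc_D M n \<omega>1 \<inter> perc_D M n \<omega>2)) = 1 - 2 * p ^ n + p ^ (2 * n)"
proof -
  have "(\<lambda>(\<omega>1, \<omega>2). V1 (perc_D M n \<omega>1 \<inter> perc_D M n \<omega>2))
      = (\<lambda>z. (\<lambda>(\<omega>1, \<omega>2). real (card {j \<in> {..<M ^ n}. removed_cell M n \<omega>1 j \<and> removed_cell M n \<omega>2 j})) z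
          / real M ^ n)"
    using V_perc_D_Int(1)[OF M, of n] by auto
  then have "measure_pmf.expectation (pair_pmf (perc_pmf M p n) (perc_pmf M p n))
      (\<lambda>(\<omega>1, \<omega>2). V1 (perc_D M n \<omega>1 \<inter> perc_D M n \<omega>2)) = (1 - p ^ n)\<^sup>2"
    using M expectation_pair_card_Collect[where I="{..<M ^ n}" and A="\<lambda>j \<omega>. removed_cell M n \<omega> j"]
    by (simp add: prob_removed_cell[OF M p])
  then show ?thesis by (simp add: power2_eq_square algebra_simps flip: power_add mult_2)
qed

lemma expectation_V0_perc_D_eq_sum:
  assumes M: "0 < M" and p: "0 \<le> p" "p \<le> 1"
  shows "measure_pmf.expectation (perc_pmf M p n) (\<lambda>\<omega>. V0 (perc_D M n \<omega>))
    = 2 * (1 - p ^ n) + (\<Sum>i\<in>{1..<M ^ n}. 1 - p ^ n * p ^ grid_levels M n i) - real M ^ n * (1 - p ^ n)"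
proof -
  have integrable: "integrable (measure_pmf (perc_pmf M p n)) f" for f :: "_ \<Rightarrow> real"
    by (rule integrable_measure_pmf_finite[OF finite_set_pmf_perc_pmf])
  have "V0 (perc_D M n \<omega>) = real (card {i \<in> {..M ^ n}. cell_endpoint (removed_cell M n \<omega>) i})
      - real (card {j \<in> {..<M ^ n}. removed_cell M n \<omega> j})" for \<omega>
    using V_perc_D_Int(2)[OF M, of n \<omega> \<omega>] by simp
  then have "measure_pmf.expectation (perc_pmf M p n) (\<lambda>\<omega>. V0 (perc_D M n \<omega>))
      = measure_pmf.expectation (perc_pmf M p n)
          (\<lambda>\<omega>. real (card {i \<in> {..M ^ n}. cell_endpoint (removed_cell M n \<omega>) i}))
        - measure_pmf.expectation (perc_pmf M p n)
          (\<lambda>\<omega>. real (card {j \<in> {..<M ^ n}. removed_cell M n \<omega> j}))"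
    by (simp add: Bochner_Integration.integral_diff[OF integrable integrable])
  then show ?thesis
    using sum_cell_endpoint_probs[OF M p, of "\<lambda>x. x" n]
      expectation_card_Collect[where I="{..<M ^ n}" and A="\<lambda>j \<omega>. removed_cell M n \<omega> j"]
      expectation_card_Collect[where I="{..M ^ n}" and A="\<lambda>i \<omega>. cell_endpoint (removed_cell M n \<omega>) i"]
    by (simp add: prob_removed_cell[OF M p])
qed

lemma expectation_V0_perc_D:
  assumes M: "2 \<le> M" and p: "0 \<le> p" "p \<le> 1"
  shows "measure_pmf.expectation (perc_pmf M p n) (\<lambda>\<omega>. V0 (perc_D M n \<omega>))
    = (real M * p) ^ n * (1 - p * (real M - 1) / (real M - p) * (1 - (p / real M) ^ n)) + 1 - 2 * p ^ n"
proof -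
  have M0: "0 < M" and Mp: "real M - p \<noteq> 0" using M p by auto
  have "(\<Sum>i\<in>{1..<M ^ n}. 1 - p ^ n * p ^ grid_levels M n i)
      = (real M ^ n - 1) - p ^ n * ((real M - 1) * p * (real M ^ n - p ^ n) / (real M - p))"
    using M0 sum_power_grid_levels_interior[OF M0, of p n] Mp
    by (simp add: sum_subtractf sum_distrib_left[symmetric] of_nat_diff)
  moreover have "2 * (1 - p ^ n)
        + ((real M ^ n - 1) - p ^ n * ((real M - 1) * p * (real M ^ n - p ^ n) / (real M - p)))
        - real M ^ n * (1 - p ^ n)
      = (real M * p) ^ n * (1 - p * (real M - 1) / (real M - p) * (1 - (p / real M) ^ n)) + 1 - 2 * p ^ n"
    using M0 Mp by (simp add: power_mult_distrib power_divide divide_simps) (simp add: algebra_simps)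
  ultimately show ?thesis by (simp add: expectation_V0_perc_D_eq_sum[OF M0 p])
qed

lemma expectation_V0_perc_D_Int_eq_sum:
  assumes M: "0 < M" and p: "0 \<le> p" "p \<le> 1"
  shows "measure_pmf.expectation (pair_pmf (perc_pmf M p n) (perc_pmf M p n))
      (\<lambda>(\<omega>1, \<omega>2). V0 (perc_D M n \<omega>1 \<inter> perc_D M n \<omega>2))
    = 2 * (1 - p ^ n)\<^sup>2 + (\<Sum>i\<in>{1..<M ^ n}. (1 - p ^ n * p ^ grid_levels M n i)\<^sup>2)
      - real M ^ n * (1 - p ^ n)\<^sup>2"
proof -
  let ?Q = "pair_pmf (perc_pmf M p n) (perc_pmf M p n)"
  have integrable: "integrable (measure_pmf ?Q) f" for f :: "_ \<Rightarrow> real"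
    by (rule integrable_measure_pmf_finite) (simp add: finite_set_pmf_perc_pmf)
  define F where "F = (\<lambda>(\<omega>1, \<omega>2). real (card {i \<in> {..M ^ n}.
    cell_endpoint (removed_cell M n \<omega>1) i \<and> cell_endpoint (removed_cell M n \<omega>2) i}))"
  define G where "G = (\<lambda>(\<omega>1, \<omega>2). real (card {j \<in> {..<M ^ n}.
    removed_cell M n \<omega>1 j \<and> removed_cell M n \<omega>2 j}))"
  have "(\<lambda>(\<omega>1, \<omega>2). V0 (perc_D M n \<omega>1 \<inter> perc_D M n \<omega>2)) = (\<lambda>z. F z - G z)"
    using V_perc_D_Int(2)[OF M, of n] by (auto simp: F_def G_def)
  then have "measure_pmf.expectation ?Q (\<lambda>(\<omega>1, \<omega>2). V0 (perc_D M n \<omega>1 \<inter> perc_D M n \<omega>2))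
      = measure_pmf.expectation ?Q F - measure_pmf.expectation ?Q G"
    by (simp add: Bochner_Integration.integral_diff[OF integrable integrable])
  also have "measure_pmf.expectation ?Q F
      = 2 * (1 - p ^ n)\<^sup>2 + (\<Sum>i\<in>{1..<M ^ n}. (1 - p ^ n * p ^ grid_levels M n i)\<^sup>2)"
    unfolding F_def expectation_pair_card_Collect[OF finite_atMost]
    by (rule sum_cell_endpoint_probs[OF M p])
  also have "measure_pmf.expectation ?Q G = real M ^ n * (1 - p ^ n)\<^sup>2"
    unfolding G_def expectation_pair_card_Collect[OF finite_lessThan]
    by (simp add: prob_removed_cell[OF M p])
  finally show ?thesis .
qed

lemma expectation_V0_perc_D_Int:
  assumes M: "2 \<le> M" and p: "0 \<le> p" "p \<le> 1"
  shows "measure_pmf.expectation (pair_pmf (perc_pmf M p n) (perc_pmf M p n))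
      (\<lambda>(\<omega>1, \<omega>2). V0 (perc_D M n \<omega>1 \<inter> perc_D M n \<omega>2))
    = 2 * (real M * p) ^ n * (1 - p * (real M - 1) / (real M - p) * (1 - (p / real M) ^ n))
      + 1 - 4 * p ^ n + 2 * p ^ (2 * n)
      + (real M * p\<^sup>2) ^ n * (- 1 + p\<^sup>2 * (real M - 1) / (real M - p\<^sup>2) * (1 - (p\<^sup>2 / real M) ^ n))"
proof -
  have M0: "0 < M" and Mp: "real M - p \<noteq> 0" using M p by auto
  have "p\<^sup>2 \<le> 1" using p by (simp add: power_le_one)
  then have Mp2: "real M - p\<^sup>2 \<noteq> 0" using M by auto
  have "(1 - p ^ n * p ^ k)\<^sup>2 = 1 - 2 * p ^ n * p ^ k + (p ^ n)\<^sup>2 * (p\<^sup>2) ^ k" for k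
    by (simp add: power2_eq_square power_mult_distrib algebra_simps flip: power_mult)
  then have "(\<Sum>i\<in>{1..<M ^ n}. (1 - p ^ n * p ^ grid_levels M n i)\<^sup>2)
      = (real M ^ n - 1) - 2 * p ^ n * ((real M - 1) * p * (real M ^ n - p ^ n) / (real M - p))
        + (p ^ n)\<^sup>2 * ((real M - 1) * p\<^sup>2 * (real M ^ n - (p\<^sup>2) ^ n) / (real M - p\<^sup>2))"
    using M0 Mp Mp2 sum_power_grid_levels_interior[OF M0, of p n]
      sum_power_grid_levels_interior[OF M0, of "p\<^sup>2" n]
    by (simp add: sum.distrib sum_subtractf sum_distrib_left[symmetric] of_nat_diff)
  moreover have "2 * (1 - p ^ n)\<^sup>2
        + ((real M ^ n - 1) - 2 * p ^ n * ((real M - 1) * p * (real M ^ n - p ^ n) / (real M - p))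
           + (p ^ n)\<^sup>2 * ((real M - 1) * p\<^sup>2 * (real M ^ n - (p\<^sup>2) ^ n) / (real M - p\<^sup>2)))
        - real M ^ n * (1 - p ^ n)\<^sup>2
      = 2 * (real M * p) ^ n * (1 - p * (real M - 1) / (real M - p) * (1 - (p / real M) ^ n))
        + 1 - 4 * p ^ n + 2 * p ^ (2 * n)
        + (real M * p\<^sup>2) ^ n * (- 1 + p\<^sup>2 * (real M - 1) / (real M - p\<^sup>2) * (1 - (p\<^sup>2 / real M) ^ n))"
    using M0 Mp Mp2
    by (simp add: power_mult_distrib power_divide power_mult divide_simps)
      (simp add: algebra_simps power2_eq_square)
  ultimately show ?thesis by (simp add: expectation_V0_perc_D_Int_eq_sum[OF M0 p])
qed

theorem theorem5p8:
  fixes M n :: nat and p :: real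
  assumes "M \<ge> 2" and "0 < p" and "p \<le> 1"
  shows
   "(measure_pmf.expectation (pair_pmf (perc_pmf M p n) (perc_pmf M p n))
       (\<lambda>(\<omega>1, \<omega>2). V1 (perc_D M n \<omega>1 \<inter> perc_D M n \<omega>2))
      = 1 - 2 * p ^ n + p ^ (2 * n))
   \<and> (measure_pmf.expectation (pair_pmf (perc_pmf M p n) (perc_pmf M p n))
       (\<lambda>(\<omega>1, \<omega>2). V0 (perc_D M n \<omega>1 \<inter> perc_D M n \<omega>2))
      = 2 * (real M * p) ^ n * (1 - p * (real M - 1) / (real M - p) * (1 - (p / real M) ^ n))
        + 1 - 4 * p ^ n + 2 * p ^ (2 * n)
        + (real M * p\<^sup>2) ^ n * (- 1 + p\<^sup>2 * (real M - 1) / (real M - p\<^sup>2) * (1 - (p\<^sup>2 / real M) ^ n)))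
   \<and> (measure_pmf.expectation (perc_pmf M p n) (\<lambda>\<omega>. V1 (perc_D M n \<omega>)) = 1 - p ^ n)
   \<and> (measure_pmf.expectation (perc_pmf M p n) (\<lambda>\<omega>. V0 (perc_D M n \<omega>))
      = (real M * p) ^ n * (1 - p * (real M - 1) / (real M - p) * (1 - (p / real M) ^ n))
        + 1 - 2 * p ^ n)"
proof -
  have "0 < M" "0 \<le> p" using assms by auto
  then show ?thesis
    using assms expectation_V1_perc_D_Int expectation_V0_perc_D_Int
      expectation_V1_perc_D expectation_V0_perc_D by simp
qed

end
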